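(* Suppose $f$ and $g$ are coprime in $\mathbb{Q}[t]$. Then there exists a positive integer $\Lambda$ such that $n\mid\Lambda$ whenever $n$ is a positive integer with $n^{12}\mid\gcd(A(a,b)^3,B(a,b)^2)$ for some $(a,b)\in\mathcal{T}_{\upsilon,\tau}$.
   Context: Fix $\upsilon\in\{1,2\}$ and positive integers $m,\tau$ with $m=1$ or $\upsilon\tau=1$. Let $f,g\in\mathbb{Z}[t]$ with $4f^3+27g^2\ne0$, no common real root, and $\max\{\frac12\deg f,\frac13\deg g\}=\frac{2m}{\upsilon\tau}$. Let $\varsigma=2m$ if $\upsilon=1$, $\varsigma=1$ if $\upsilon=2$; $A(x,y)=y^{2\varsigma}f(x/y^\tau)$, $B(x,y)=y^{3\varsigma}g(x/y^\tau)\in\mathbb{Z}[x,y]$. $\mathcal{T}_{\upsilon,\tau}=\{(a,b)\in\mathbb{Z}^2\setminus\{(0,0)\}:p^{\upsilon\tau}\nmid\gcd(a,b^\tau)\text{ for every prime }p\}$. *)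

theory Defs
  imports "HOL-Computational_Algebra.Computational_Algebra"
begin

definition vsig :: "nat \<Rightarrow> nat \<Rightarrow> nat" where
  "vsig \<upsilon> m = (if \<upsilon> = 1 then 2 * m else 1)"

(* weighted homogenisation  y^k f(x / y^\<tau>) = \<Sum>_i f_i x^i y^(k - \<tau> i),
   a genuine polynomial in x,y when \<tau> * deg f \<le> k (guaranteed by the degree hypothesis) *)
definition homog :: "int poly \<Rightarrow> nat \<Rightarrow> nat \<Rightarrow> int \<Rightarrow> int \<Rightarrow> int" where
  "homog f k \<tau> x y = (\<Sum>i\<le>degree f. coeff f i * x ^ i * y ^ (k - \<tau> * i))"

definition A_form :: "nat \<Rightarrow> nat \<Rightarrow> nat \<Rightarrow> int poly \<Rightarrow> int \<Rightarrow> int \<Rightarrow> int" where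
  "A_form \<upsilon> m \<tau> f x y = homog f (2 * vsig \<upsilon> m) \<tau> x y"

definition B_form :: "nat \<Rightarrow> nat \<Rightarrow> nat \<Rightarrow> int poly \<Rightarrow> int \<Rightarrow> int \<Rightarrow> int" where
  "B_form \<upsilon> m \<tau> g x y = homog g (3 * vsig \<upsilon> m) \<tau> x y"

definition T_set :: "nat \<Rightarrow> nat \<Rightarrow> (int \<times> int) set" where
  "T_set \<upsilon> \<tau> = {(a, b). (a, b) \<noteq> (0, 0) \<and>
       (\<forall>p::int. prime p \<longrightarrow> \<not> p ^ (\<upsilon> * \<tau>) dvd gcd a (b ^ \<tau>))}"

end

(*
  Let h be one of f, g of full weighted degree, \<tau> * deg h = K \<in> {2\<sigma>, 3\<sigma>}, and H its form.
  Clearing denominators in a Bezout identity for f, g over Q gives U A + V B = R b^M with a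
  fixed integer R \<noteq> 0.

  Suppose p^(4k) | A(a,b), p^(6k) | B(a,b) and (a,b) is reduced at p, i.e. not both p^\<tau> | a
  and p | b.  If p does not divide b, the identity gives p^(4k) | R.  Otherwise v_p(a) < \<tau>, and
  once v_p(b) > v_p(lead h) the top term lead h * a^(deg h) is the only term of H of minimal
  valuation, so v_p(H) = deg h * v_p(a) + v_p(lead h) < K + v_p(lead h); if instead
  v_p(b) \<le> v_p(lead h), the identity bounds k.  With v_p(lead h) = 0 the same top-term argument
  shows that p divides R * lead h.  A pair of T that is not reduced at p occurs only for \<upsilon> = 2,
  and then it is (p^\<tau> a', p b') with (a',b') reduced, where A and B pick up p^2 and p^3.
  So every prime divisor of n divides R * lead h, with uniformly bounded exponent.
*)
theory Submission
  imports Defs "HOL-Computational_Algebra.Field_as_Ring"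
begin

lemma prime_powers_dvd_of_gcd_cube_square:
  fixes n x y p :: "'a :: factorial_semiring_gcd"
  assumes "n ^ 12 dvd gcd (x ^ 3) (y ^ 2)"
  shows "p ^ (4 * multiplicity p n) dvd x" and "p ^ (6 * multiplicity p n) dvd y"
proof -
  have "n ^ 12 dvd x ^ 3" and "n ^ 12 dvd y ^ 2"
    using assms dvd_trans gcd_dvd1 gcd_dvd2 by blast+
  moreover have "(n ^ 4) ^ 3 = n ^ 12" and "(n ^ 6) ^ 2 = n ^ 12"
    by (simp_all flip: power_mult)
  ultimately have "n ^ 4 dvd x" and "n ^ 6 dvd y"
    using pow_divides_pow_iff[of 3 "n ^ 4" x] pow_divides_pow_iff[of 2 "n ^ 6" y] by simp_all
  moreover have "(p ^ multiplicity p n) ^ 4 dvd n ^ 4" and "(p ^ multiplicity p n) ^ 6 dvd n ^ 6"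
    by (simp_all add: dvd_power_same multiplicity_dvd)
  ultimately show "p ^ (4 * multiplicity p n) dvd x" and "p ^ (6 * multiplicity p n) dvd y"
    by (metis dvd_trans mult.commute power_mult)+
qed

lemma dvd_of_multiplicity_bounds:
  fixes n X D :: "'a :: factorial_semiring"
  assumes n: "n \<noteq> 0" and X: "X \<noteq> 0" and D: "D \<noteq> 0"
    and bound: "\<And>p. prime p \<Longrightarrow> p dvd n
                  \<Longrightarrow> multiplicity p n \<le> multiplicity p X + K \<and> p dvd D"
  shows "n dvd X * D ^ K"
proof (rule multiplicity_le_imp_dvd[OF n])
  fix p :: 'a assume p: "prime p"
  show "multiplicity p n \<le> multiplicity p (X * D ^ K)"
  proof (cases "p dvd n")
    case True
    with p bound have n_le: "multiplicity p n \<le> multiplicity p X + K" and "p dvd D"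
      by blast+
    then have "1 \<le> multiplicity p D"
      using p D by (intro multiplicity_geI) (auto simp: not_prime_unit)
    then have "K \<le> K * multiplicity p D"
      by simp
    also have "multiplicity p X + K * multiplicity p D = multiplicity p (X * D ^ K)"
      using p X D by (simp add: prime_elem_multiplicity_mult_distrib prime_elem_multiplicity_power_distrib)
    finally show ?thesis
      using n_le by linarith
  qed (simp add: not_dvd_imp_multiplicity_0)
qed

lemma max_half_third_eq_ratio:
  fixes d e s t :: nat
  assumes eq: "max (real d / 2) (real e / 3) = real s / real t" and t: "t > 0"
  shows "t * d \<le> 2 * s" and "t * e \<le> 3 * s" and "t * d = 2 * s \<or> t * e = 3 * s"
proof -
  have "real d / 2 \<le> real s / real t" and "real e / 3 \<le> real s / real t"
    "real d / 2 = real s / real t \<or> real e / 3 = real s / real t"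
    using eq by (auto simp: max_def split: if_splits)
  then have "real (t * d) \<le> real (2 * s)" and "real (t * e) \<le> real (3 * s)"
    "real (t * d) = real (2 * s) \<or> real (t * e) = real (3 * s)"
    using t by (simp_all add: field_simps)
  then show "t * d \<le> 2 * s" and "t * e \<le> 3 * s" and "t * d = 2 * s \<or> t * e = 3 * s"
    by (simp_all only: of_nat_le_iff of_nat_eq_iff)
qed

lemma rat_poly_clear_denominators:
  fixes q :: "rat poly"
  obtains d :: int and Q :: "int poly" where "d > 0" and "smult (of_int d) q = map_poly of_int Q"
proof (induction q arbitrary: thesis)
  case 0
  show ?case by (rule "0"[of 1 0]) simp_all
next
  case (pCons c q)
  obtain d Q where d: "d > 0" and Q: "smult (of_int d) q = map_poly of_int Q"
    using pCons.IH by blast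
  obtain n e where "quotient_of c = (n, e)" by (cases "quotient_of c")
  then have e: "e > 0" and c: "c = of_int n / of_int e"
    by (simp_all add: quotient_of_denom_pos quotient_of_div)
  have "smult (of_int (d * e)) (pCons c q) = pCons (of_int (d * n)) (smult (of_int e) (map_poly of_int Q))"
    using e by (simp add: c Q[symmetric] mult.commute)
  also have "\<dots> = map_poly of_int (pCons (d * n) (smult e Q))"
    by (simp add: map_poly_pCons map_poly_smult)
  finally show ?case
    using d e by (intro pCons.prems[of "d * e"]) simp_all
qed

lemma coprime_int_poly_bezout:
  fixes f g :: "int poly"
  assumes "coprime (map_poly of_int f :: rat poly) (map_poly of_int g)"
  obtains u v :: "int poly" and R :: int where "R \<noteq> 0" and
    "\<And>t::rat. poly (map_poly of_int u) t * poly (map_poly of_int f) t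
                + poly (map_poly of_int v) t * poly (map_poly of_int g) t = of_int R"
proof -
  obtain u0 v0 :: "rat poly" where uv0: "u0 * map_poly of_int f + v0 * map_poly of_int g = 1"
    using assms bezout_coefficients_fst_snd[of "map_poly of_int f :: rat poly"] by (metis coprime_iff_gcd_eq_1)
  obtain d1 U where d1: "d1 > 0" and U: "smult (of_int d1) u0 = map_poly of_int U"
    by (rule rat_poly_clear_denominators)
  obtain d2 V where d2: "d2 > 0" and V: "smult (of_int d2) v0 = map_poly of_int V"
    by (rule rat_poly_clear_denominators)
  show thesis
  proof (rule that[of "d1 * d2" "smult d2 U" "smult d1 V"])
    show "d1 * d2 \<noteq> 0" using d1 d2 by simp
    fix t :: rat
    have "poly (u0 * map_poly of_int f + v0 * map_poly of_int g) t = 1"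
      by (simp add: uv0)
    then have "of_int d1 * of_int d2 * (poly u0 t * poly (map_poly of_int f) t
                + poly v0 t * poly (map_poly of_int g) t) = (of_int (d1 * d2) :: rat)"
      by simp
    then show "poly (map_poly of_int (smult d2 U)) t * poly (map_poly of_int f) t
                + poly (map_poly of_int (smult d1 V)) t * poly (map_poly of_int g) t = of_int (d1 * d2)"
      by (simp add: map_poly_smult U[symmetric] V[symmetric] distrib_left mult_ac)
  qed
qed

lemma homog_eq_scaled_poly:
  fixes h :: "int poly" and a b :: int
  assumes b: "b \<noteq> 0" and deg: "\<tau> * degree h \<le> k"
  shows "(of_int (homog h k \<tau> a b) :: 'a :: field_char_0) =
           of_int b ^ k * poly (map_poly of_int h) (of_int a / of_int b ^ \<tau>)"
proof -
  have "of_int b ^ k * (of_int a / of_int b ^ \<tau>) ^ i = (of_int (a ^ i * b ^ (k - \<tau> * i)) :: 'a)"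
    if "i \<le> degree h" for i
  proof -
    have "k = (k - \<tau> * i) + \<tau> * i"
      using that deg by (metis le_add_diff_inverse2 mult_le_mono2 order_trans)
    then have "(of_int b :: 'a) ^ k = of_int b ^ (k - \<tau> * i) * (of_int b ^ \<tau>) ^ i"
      by (metis power_add power_mult)
    then show ?thesis
      using b by (simp add: power_divide)
  qed
  then have "of_int b ^ k * poly (map_poly of_int h) (of_int a / of_int b ^ \<tau>) =
      (\<Sum>i\<le>degree h. of_int (coeff h i) * (of_int (a ^ i * b ^ (k - \<tau> * i)) :: 'a))"
    by (simp add: poly_altdef degree_map_poly coeff_map_poly sum_distrib_left mult.left_commute)
  then show ?thesis
    by (simp add: homog_def mult.assoc)
qed

lemma homog_weighted_scale:
  fixes h :: "int poly" and a b q :: int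
  assumes deg: "\<tau> * degree h \<le> k"
  shows "homog h k \<tau> (q ^ \<tau> * a) (q * b) = q ^ k * homog h k \<tau> a b"
  unfolding homog_def sum_distrib_left
proof (rule sum.cong)
  fix i assume "i \<in> {..degree h}"
  then have "k = \<tau> * i + (k - \<tau> * i)"
    using deg by (metis atMost_iff le_add_diff_inverse mult_le_mono2 order_trans)
  then have "q ^ k = (q ^ \<tau>) ^ i * q ^ (k - \<tau> * i)"
    by (metis power_add power_mult)
  then show "coeff h i * (q ^ \<tau> * a) ^ i * (q * b) ^ (k - \<tau> * i) =
         q ^ k * (coeff h i * a ^ i * b ^ (k - \<tau> * i))"
    by (simp add: power_mult_distrib algebra_simps)
qed simp

lemma homog_split_top:
  assumes "\<tau> * degree h = K"
  shows "homog h K \<tau> a b =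
           (\<Sum>i<degree h. coeff h i * a ^ i * b ^ (K - \<tau> * i)) + lead_coeff h * a ^ degree h"
  using assms by (simp add: homog_def lessThan_Suc_atMost[symmetric])

lemma homog_top_term_not_dvd:
  fixes h :: "int poly" and p a b :: int
  assumes p: "prime p" and hK: "\<tau> * degree h = K" and h: "h \<noteq> 0"
    and a: "a \<noteq> 0" and \<alpha>: "multiplicity p a < \<tau>"
    and b: "p ^ Suc (multiplicity p (lead_coeff h)) dvd b"
  shows "\<not> p ^ Suc (degree h * multiplicity p a + multiplicity p (lead_coeff h))
            dvd homog h K \<tau> a b" (is "\<not> ?dvd")
proof
  define \<alpha> \<gamma> d where "\<alpha> = multiplicity p a" and "\<gamma> = multiplicity p (lead_coeff h)"
    and "d = degree h"
  define N where "N = Suc (d * \<alpha> + \<gamma>)"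
  assume ?dvd
  then have H: "p ^ N dvd homog h K \<tau> a b"
    by (simp add: N_def \<alpha>_def \<gamma>_def d_def)
  have "p ^ N dvd coeff h i * a ^ i * b ^ (K - \<tau> * i)" if i: "i < d" for i
  proof -
    have "(\<alpha> + 1) * (d - i) \<le> \<tau> * (d - i)"
      using \<alpha> by (intro mult_le_mono1) (simp add: \<alpha>_def)
    also have "\<dots> = K - \<tau> * i"
      using hK by (simp add: d_def diff_mult_distrib2)
    finally have "(\<gamma> + 1) * ((\<alpha> + 1) * (d - i)) \<le> (\<gamma> + 1) * (K - \<tau> * i)"
      by (rule mult_le_mono2)
    moreover have "N \<le> i * \<alpha> + (\<gamma> + 1) * ((\<alpha> + 1) * (d - i))"
    proof -
      obtain e where e: "d = i + Suc e" using i less_iff_Suc_add by auto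
      show ?thesis unfolding N_def e by (simp add: algebra_simps)
    qed
    ultimately have N: "N \<le> i * \<alpha> + Suc \<gamma> * (K - \<tau> * i)"
      by simp
    have "p ^ (i * \<alpha>) dvd a ^ i"
      by (metis \<alpha>_def dvd_power_same multiplicity_dvd mult.commute power_mult)
    moreover have "p ^ (Suc \<gamma> * (K - \<tau> * i)) dvd b ^ (K - \<tau> * i)"
      using dvd_power_same[OF b] by (simp only: \<gamma>_def power_mult)
    ultimately have "p ^ (i * \<alpha> + Suc \<gamma> * (K - \<tau> * i)) dvd a ^ i * b ^ (K - \<tau> * i)"
      unfolding power_add by (rule mult_dvd_mono)
    then have "p ^ N dvd a ^ i * b ^ (K - \<tau> * i)"
      using N le_imp_power_dvd dvd_trans by blast
    then show ?thesis
      by (simp add: mult.assoc)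
  qed
  then have lower: "p ^ N dvd (\<Sum>i<d. coeff h i * a ^ i * b ^ (K - \<tau> * i))"
    by (auto intro: dvd_sum)
  have "multiplicity p (lead_coeff h * a ^ d) = \<gamma> + d * \<alpha>"
    using prime_imp_prime_elem[OF p] a h
    by (simp add: \<alpha>_def \<gamma>_def prime_elem_multiplicity_mult_distrib
        prime_elem_multiplicity_power_distrib)
  then have "\<not> p ^ N dvd lead_coeff h * a ^ d"
    using p a h by (subst power_dvd_iff_le_multiplicity) (auto simp: N_def)
  then show False
    using H lower homog_split_top[OF hK] by (simp add: d_def dvd_add_right_iff)
qed

lemma homog_bezout:
  fixes f g u v :: "int poly" and R a b :: int
  assumes bezout: "\<And>t::rat. poly (map_poly of_int u) t * poly (map_poly of_int f) t
                      + poly (map_poly of_int v) t * poly (map_poly of_int g) t = of_int R"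
    and df: "\<tau> * degree f \<le> Kf" and dg: "\<tau> * degree g \<le> Kg"
    and du: "\<tau> * degree u + Kf \<le> M" and dv: "\<tau> * degree v + Kg \<le> M" and b: "b \<noteq> 0"
  shows "homog u (M - Kf) \<tau> a b * homog f Kf \<tau> a b + homog v (M - Kg) \<tau> a b * homog g Kg \<tau> a b
           = R * b ^ M"
proof -
  define t where "t = (of_int a / of_int b ^ \<tau> :: rat)"
  have du': "\<tau> * degree u \<le> M - Kf" and dv': "\<tau> * degree v \<le> M - Kg"
    using du dv by simp_all
  have bf: "(of_int b :: rat) ^ (M - Kf) * of_int b ^ Kf = of_int b ^ M"
    and bg: "(of_int b :: rat) ^ (M - Kg) * of_int b ^ Kg = of_int b ^ M"
    using du dv by (simp_all flip: power_add)
  have "(of_int (homog u (M - Kf) \<tau> a b * homog f Kf \<tau> a b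
                + homog v (M - Kg) \<tau> a b * homog g Kg \<tau> a b) :: rat)
        = of_int b ^ (M - Kf) * poly (map_poly of_int u) t * (of_int b ^ Kf * poly (map_poly of_int f) t)
          + of_int b ^ (M - Kg) * poly (map_poly of_int v) t * (of_int b ^ Kg * poly (map_poly of_int g) t)"
    by (simp only: of_int_add of_int_mult homog_eq_scaled_poly[OF b] df dg du' dv' t_def)
  also have "\<dots> = (of_int b ^ (M - Kf) * of_int b ^ Kf)
                      * (poly (map_poly of_int u) t * poly (map_poly of_int f) t)
                    + (of_int b ^ (M - Kg) * of_int b ^ Kg)
                      * (poly (map_poly of_int v) t * poly (map_poly of_int g) t)"
    by (simp only: mult_ac)
  also have "\<dots> = of_int (R * b ^ M)"
    by (simp only: bf bg bezout flip: distrib_left) simp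
  finally show ?thesis
    by (simp only: of_int_eq_iff)
qed

lemma homog_common_divisor:
  fixes f g :: "int poly"
  assumes "coprime (map_poly of_int f :: rat poly) (map_poly of_int g)"
    and df: "\<tau> * degree f \<le> Kf" and dg: "\<tau> * degree g \<le> Kg"
  obtains R :: int and M :: nat where "R \<noteq> 0" and
    "\<And>a b d. b \<noteq> 0 \<Longrightarrow> d dvd homog f Kf \<tau> a b \<Longrightarrow> d dvd homog g Kg \<tau> a b
       \<Longrightarrow> d dvd R * b ^ M"
proof -
  obtain R u v where R: "R \<noteq> 0" and bezout:
    "\<And>t::rat. poly (map_poly of_int u) t * poly (map_poly of_int f) t
                + poly (map_poly of_int v) t * poly (map_poly of_int g) t = of_int R"
    using coprime_int_poly_bezout[OF assms(1)] by metis
  define M where "M = \<tau> * (degree u + degree v) + Kf + Kg"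
  have du: "\<tau> * degree u + Kf \<le> M" and dv: "\<tau> * degree v + Kg \<le> M"
    by (simp_all add: M_def add_mult_distrib2)
  have "d dvd R * b ^ M"
    if "b \<noteq> 0" "d dvd homog f Kf \<tau> a b" "d dvd homog g Kg \<tau> a b" for a b d
  proof -
    have "d dvd homog u (M - Kf) \<tau> a b * homog f Kf \<tau> a b
                + homog v (M - Kg) \<tau> a b * homog g Kg \<tau> a b"
      using that(2,3) by (intro dvd_add dvd_mult)
    then show ?thesis
      by (simp only: homog_bezout[OF bezout df dg du dv \<open>b \<noteq> 0\<close>])
  qed
  with R show thesis by (rule that)
qed

definition reduced_at :: "int \<Rightarrow> nat \<Rightarrow> int \<Rightarrow> int \<Rightarrow> bool" where
  "reduced_at p \<tau> a b \<longleftrightarrow> \<not> (p ^ \<tau> dvd a \<and> p dvd b)"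

lemma reduced_at_multiplicity_less:
  assumes "reduced_at p \<tau> a b" and "p dvd b"
  shows "a \<noteq> 0" and "multiplicity p a < \<tau>"
proof -
  have "\<not> p ^ \<tau> dvd a"
    using assms by (simp add: reduced_at_def)
  then show "a \<noteq> 0" and "multiplicity p a < \<tau>"
    by (auto simp: not_less[symmetric] intro: multiplicity_dvd')
qed

lemma reduced_exponent_bound:
  fixes h :: "int poly" and p a b R :: int
  assumes p: "prime p" and red: "reduced_at p \<tau> a b"
    and hK: "\<tau> * degree h = K" and h: "h \<noteq> 0" and R: "R \<noteq> 0"
    and H: "p ^ j dvd homog h K \<tau> a b" and common: "b \<noteq> 0 \<Longrightarrow> p ^ j dvd R * b ^ M"
  shows "j \<le> multiplicity p (R * lead_coeff h ^ Suc M) + K"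
proof -
  define \<gamma> where "\<gamma> = multiplicity p (lead_coeff h)"
  have pe: "prime_elem p" using p by (rule prime_imp_prime_elem)
  have bound: "multiplicity p (R * lead_coeff h ^ Suc M) = multiplicity p R + Suc M * \<gamma>"
    using pe R h by (simp add: \<gamma>_def prime_elem_multiplicity_mult_distrib
        prime_elem_multiplicity_power_distrib)
  have via_common: "j \<le> multiplicity p R + M * multiplicity p b" if "b \<noteq> 0"
  proof -
    have "j \<le> multiplicity p (R * b ^ M)"
      using common[OF that] R that p by (intro multiplicity_geI) (auto simp: not_prime_unit)
    also have "\<dots> = multiplicity p R + M * multiplicity p b"
      using pe R that by (simp add: prime_elem_multiplicity_mult_distrib
          prime_elem_multiplicity_power_distrib)
    finally show ?thesis .
  qed
  consider (coprime) "\<not> p dvd b" | (deep) "p ^ Suc \<gamma> dvd b" | (shallow) "p dvd b" "\<not> p ^ Suc \<gamma> dvd b"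
    by blast
  then show ?thesis
  proof cases
    case coprime
    then have "b \<noteq> 0" by auto
    then have "j \<le> multiplicity p R"
      using via_common coprime by (simp add: not_dvd_imp_multiplicity_0)
    then show ?thesis
      unfolding bound by simp
  next
    case deep
    then have "p dvd b" by (rule dvd_trans[rotated]) simp
    note a = reduced_at_multiplicity_less[OF red this]
    have "\<not> p ^ Suc (degree h * multiplicity p a + \<gamma>) dvd homog h K \<tau> a b"
      using homog_top_term_not_dvd[OF p hK h a] deep by (simp add: \<gamma>_def)
    then have "j \<le> degree h * multiplicity p a + \<gamma>"
      using H le_imp_power_dvd dvd_trans by (metis not_less_eq_eq)
    moreover have "degree h * multiplicity p a \<le> K"
      using a(2) hK by (metis less_imp_le_nat mult.commute mult_le_mono1)
    ultimately show ?thesis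
      unfolding bound by simp
  next
    case shallow
    then have "b \<noteq> 0" by auto
    have "multiplicity p b \<le> \<gamma>"
      using shallow(2) multiplicity_dvd' by (metis not_less_eq_eq)
    then have "M * multiplicity p b \<le> Suc M * \<gamma>"
      by (intro mult_le_mono) simp_all
    then show ?thesis
      using via_common[OF \<open>b \<noteq> 0\<close>] unfolding bound by simp
  qed
qed

lemma reduced_prime_dvd:
  fixes h :: "int poly" and p a b R :: int
  assumes p: "prime p" and red: "reduced_at p \<tau> a b"
    and hK: "\<tau> * degree h = K" and h: "h \<noteq> 0"
    and H: "p ^ Suc (degree h * (\<tau> - 1)) dvd homog h K \<tau> a b"
    and common: "b \<noteq> 0 \<Longrightarrow> p dvd R * b ^ M"
  shows "p dvd R * lead_coeff h"
proof (rule ccontr)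
  assume "\<not> p dvd R * lead_coeff h"
  then have R: "\<not> p dvd R" and c: "\<not> p dvd lead_coeff h"
    by auto
  show False
  proof (cases "p dvd b")
    case False
    then have "p dvd R * b ^ M"
      using common by auto
    with p R False show False
      by (auto simp: prime_dvd_mult_iff dest: prime_dvd_power)
  next
    case True
    note a = reduced_at_multiplicity_less[OF red True]
    have "\<not> p ^ Suc (degree h * multiplicity p a) dvd homog h K \<tau> a b"
      using homog_top_term_not_dvd[OF p hK h a] True c by (simp add: not_dvd_imp_multiplicity_0)
    moreover have "degree h * multiplicity p a \<le> degree h * (\<tau> - 1)"
      using a(2) by (intro mult_le_mono2) linarith
    ultimately show False
      using H le_imp_power_dvd dvd_trans by (metis Suc_le_mono)
  qed
qed

lemma T_set_prime_cases:
  assumes T: "(a, b) \<in> T_set \<upsilon> \<tau>" and \<upsilon>: "\<upsilon> \<in> {1, 2}" and p: "prime p"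
  obtains "reduced_at p \<tau> a b"
    | a' b' where "\<upsilon> = 2" "a = p ^ \<tau> * a'" "b = p * b'" "reduced_at p \<tau> a' b'"
proof (cases "reduced_at p \<tau> a b")
  case False
  then obtain a' b' where a: "a = p ^ \<tau> * a'" and b: "b = p * b'"
    by (auto simp: reduced_at_def elim!: dvdE)
  have not_dvd: "\<not> p ^ (\<upsilon> * \<tau>) dvd gcd a (b ^ \<tau>)"
    using T p by (simp add: T_set_def)
  have "p ^ \<tau> dvd b ^ \<tau>"
    using b by (simp add: dvd_power_same)
  then have "\<upsilon> \<noteq> 1"
    using not_dvd a by auto
  then have \<upsilon>2: "\<upsilon> = 2"
    using \<upsilon> by simp
  have "reduced_at p \<tau> a' b'"
  proof (unfold reduced_at_def, rule notI)
    assume "p ^ \<tau> dvd a' \<and> p dvd b'"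
    then have "p ^ \<tau> * p ^ \<tau> dvd a" and "(p * p) ^ \<tau> dvd b ^ \<tau>"
      using a b by (auto intro: mult_dvd_mono dvd_power_same)
    then have "p ^ (\<upsilon> * \<tau>) dvd gcd a (b ^ \<tau>)"
      using \<upsilon>2 by (simp add: mult_2 power_add power_mult_distrib)
    with not_dvd show False ..
  qed
  with \<upsilon>2 a b show thesis by (rule that(2))
qed (rule that(1))

locale weighted_forms =
  fixes f g h :: "int poly" and \<tau> \<sigma> K M :: nat and R :: int
  assumes deg_f: "\<tau> * degree f \<le> 2 * \<sigma>" and deg_g: "\<tau> * degree g \<le> 3 * \<sigma>"
    and full: "(h, K) \<in> {(f, 2 * \<sigma>), (g, 3 * \<sigma>)}" and deg_h: "\<tau> * degree h = K"
    and h_nonzero: "h \<noteq> 0" and R_nonzero: "R \<noteq> 0"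
    and common_divisor: "\<And>a b d. b \<noteq> 0 \<Longrightarrow> d dvd homog f (2 * \<sigma>) \<tau> a b
                           \<Longrightarrow> d dvd homog g (3 * \<sigma>) \<tau> a b \<Longrightarrow> d dvd R * b ^ M"
begin

abbreviation A :: "int \<Rightarrow> int \<Rightarrow> int" where "A \<equiv> homog f (2 * \<sigma>) \<tau>"
abbreviation B :: "int \<Rightarrow> int \<Rightarrow> int" where "B \<equiv> homog g (3 * \<sigma>) \<tau>"
abbreviation H :: "int \<Rightarrow> int \<Rightarrow> int" where "H \<equiv> homog h K \<tau>"

lemma prime_power_dvd_H:
  assumes "p ^ eA dvd A a b" "p ^ eB dvd B a b" "0 < eA" "0 < eB"
    and "\<tau> = 1 \<or> 2 * \<sigma> \<le> eA \<and> 3 * \<sigma> \<le> eB"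
  shows "p ^ Suc (degree h * (\<tau> - 1)) dvd H a b"
proof -
  have e: "Suc (degree h * (\<tau> - 1)) \<le> max 1 K"
    using deg_h by (cases "degree h = 0"; cases \<tau>) (simp_all add: algebra_simps)
  from full consider "h = f" "K = 2 * \<sigma>" | "h = g" "K = 3 * \<sigma>"
    by auto
  then show ?thesis
  proof cases
    case 1
    then have "Suc (degree h * (\<tau> - 1)) \<le> eA"
      using e assms(3,5) by auto
    then show ?thesis
      using assms(1) 1 le_imp_power_dvd dvd_trans by blast
  next
    case 2
    then have "Suc (degree h * (\<tau> - 1)) \<le> eB"
      using e assms(4,5) by auto
    then show ?thesis
      using assms(2) 2 le_imp_power_dvd dvd_trans by blast
  qed
qed

lemma reduced_pair_estimates:
  assumes p: "prime p" and red: "reduced_at p \<tau> a b" and "0 < k" "k \<le> j"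
    and A: "p ^ j dvd A a b" and B: "p ^ j dvd B a b"
    and H: "p ^ Suc (degree h * (\<tau> - 1)) dvd H a b"
  shows "k \<le> multiplicity p (R * lead_coeff h ^ Suc M) + K \<and> p dvd R * lead_coeff h"
proof
  have "p ^ j dvd H a b"
    using full A B by auto
  then have "j \<le> multiplicity p (R * lead_coeff h ^ Suc M) + K"
    using reduced_exponent_bound[OF p red deg_h h_nonzero R_nonzero] common_divisor A B by blast
  then show "k \<le> multiplicity p (R * lead_coeff h ^ Suc M) + K"
    using \<open>k \<le> j\<close> by simp
  have "p dvd p ^ j"
    using \<open>0 < k\<close> \<open>k \<le> j\<close> by simp
  then show "p dvd R * lead_coeff h"
    using reduced_prime_dvd[OF p red deg_h h_nonzero H] common_divisor A B dvd_trans by blast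
qed

lemma T_set_prime_power_estimates:
  assumes p: "prime p" and k: "0 < k"
    and T: "(a, b) \<in> T_set \<upsilon> \<tau>" and \<upsilon>: "\<upsilon> \<in> {1, 2}"
    and \<sigma>1: "\<upsilon> = 2 \<Longrightarrow> \<sigma> = 1" and \<sigma>2: "\<tau> = 1 \<or> \<sigma> \<le> 2"
    and A: "p ^ (4 * k) dvd A a b" and B: "p ^ (6 * k) dvd B a b"
  shows "k \<le> multiplicity p (R * lead_coeff h ^ Suc M) + K \<and> p dvd R * lead_coeff h"
  using T \<upsilon> p
proof (cases rule: T_set_prime_cases)
  case 1
  have "p ^ (4 * k) dvd B a b"
    using B le_imp_power_dvd[of "4 * k" "6 * k" p] dvd_trans by auto
  moreover have "p ^ Suc (degree h * (\<tau> - 1)) dvd H a b"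
    using k \<sigma>2 by (intro prime_power_dvd_H[OF A B]) auto
  ultimately show ?thesis
    using reduced_pair_estimates[OF p 1 k _ A] by simp
next
  case (2 a' b')
  have \<sigma>: "\<sigma> = 1" using \<sigma>1 2(1) .
  have p0: "p \<noteq> 0" using p by auto
  have "A a b = p ^ 2 * A a' b'" "B a b = p ^ 3 * B a' b'"
    using homog_weighted_scale[OF deg_f] homog_weighted_scale[OF deg_g] 2(2,3) \<sigma> by simp_all
  moreover have "4 * k = 2 + (4 * k - 2)" "6 * k = 3 + (6 * k - 3)"
    using k by simp_all
  ultimately have A': "p ^ (4 * k - 2) dvd A a' b'" and B': "p ^ (6 * k - 3) dvd B a' b'"
    using A B p0 by (metis dvd_mult_cancel_left power_add power_eq_0_iff)+
  have "p ^ (4 * k - 2) dvd B a' b'"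
    using B' le_imp_power_dvd[of "4 * k - 2" "6 * k - 3" p] dvd_trans by auto
  moreover have "p ^ Suc (degree h * (\<tau> - 1)) dvd H a' b'"
    using k \<sigma> by (intro prime_power_dvd_H[OF A' B']) auto
  ultimately show ?thesis
    using reduced_pair_estimates[OF p 2(4) k _ A'] k by simp
qed

lemma T_set_gcd_cube_square_dvd:
  assumes T: "(a, b) \<in> T_set \<upsilon> \<tau>" and \<upsilon>: "\<upsilon> \<in> {1, 2}"
    and \<sigma>1: "\<upsilon> = 2 \<Longrightarrow> \<sigma> = 1" and \<sigma>2: "\<tau> = 1 \<or> \<sigma> \<le> 2"
    and n: "n \<noteq> 0" and n_dvd: "n ^ 12 dvd gcd (A a b ^ 3) (B a b ^ 2)"
  shows "n dvd R * lead_coeff h ^ Suc M * (R * lead_coeff h) ^ K"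
proof (rule dvd_of_multiplicity_bounds[OF n])
  show "R * lead_coeff h ^ Suc M \<noteq> 0" and "R * lead_coeff h \<noteq> 0"
    using R_nonzero h_nonzero by simp_all
  fix p :: int assume p: "prime p" and "p dvd n"
  then have "0 < multiplicity p n"
    using n multiplicity_gt_zero_iff[of n p] not_prime_unit by auto
  then show "multiplicity p n \<le> multiplicity p (R * lead_coeff h ^ Suc M) + K
              \<and> p dvd R * lead_coeff h"
    using T_set_prime_power_estimates[OF p _ T \<upsilon> \<sigma>1 \<sigma>2]
      prime_powers_dvd_of_gcd_cube_square[OF n_dvd] by blast
qed

end

lemma vsig_props:
  assumes "\<upsilon> \<in> {1, 2}" and "m > 0" and "m = 1 \<or> \<upsilon> * \<tau> = 1"
  shows "0 < vsig \<upsilon> m" and "2 * real m / real (\<upsilon> * \<tau>) = real (vsig \<upsilon> m) / real \<tau>"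
    and "\<upsilon> = 2 \<Longrightarrow> vsig \<upsilon> m = 1" and "\<tau> = 1 \<or> vsig \<upsilon> m \<le> 2"
  using assms by (auto simp: vsig_def)

theorem lemma2p7:
  fixes \<upsilon> m \<tau> :: nat and f g :: "int poly"
  assumes hups: "\<upsilon> \<in> {1, 2}"
    and hm: "m > 0" and htau: "\<tau> > 0"
    and hmt: "m = 1 \<or> \<upsilon> * \<tau> = 1"
    and hdisc: "4 * f ^ 3 + 27 * g ^ 2 \<noteq> 0"
    and hroot: "\<not> (\<exists>x::real. poly (map_poly of_int f) x = 0 \<and> poly (map_poly of_int g) x = 0)"
    and hdeg: "max (real (degree f) / 2) (real (degree g) / 3) = 2 * real m / real (\<upsilon> * \<tau>)"
    and hcop: "coprime (map_poly of_int f :: rat poly) (map_poly of_int g)"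
  shows "\<exists>\<Lambda>::int. \<Lambda> > 0 \<and>
           (\<forall>n::int. n > 0 \<longrightarrow>
              (\<exists>(a, b) \<in> T_set \<upsilon> \<tau>.
                 n ^ 12 dvd gcd ((A_form \<upsilon> m \<tau> f a b) ^ 3) ((B_form \<upsilon> m \<tau> g a b) ^ 2))
              \<longrightarrow> n dvd \<Lambda>)"
proof -
  define \<sigma> where "\<sigma> = vsig \<upsilon> m"
  note \<sigma> = vsig_props[OF hups hm hmt, folded \<sigma>_def]
  note deg = max_half_third_eq_ratio[OF hdeg[unfolded \<sigma>(2)] htau]
  obtain R M where R: "R \<noteq> 0"
    and common: "\<And>a b d. b \<noteq> 0 \<Longrightarrow> d dvd homog f (2 * \<sigma>) \<tau> a b
                   \<Longrightarrow> d dvd homog g (3 * \<sigma>) \<tau> a b \<Longrightarrow> d dvd R * b ^ M"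
    using homog_common_divisor[OF hcop deg(1,2)] by metis
  obtain h K where hK: "(h, K) \<in> {(f, 2 * \<sigma>), (g, 3 * \<sigma>)}" and deg_h: "\<tau> * degree h = K"
    using deg(3) by blast
  have "h \<noteq> 0"
    using hK deg_h \<sigma>(1) by auto
  then interpret weighted_forms f g h \<tau> \<sigma> K M R
    using deg(1,2) hK deg_h R common by unfold_locales
  define \<Lambda> where "\<Lambda> = \<bar>R * lead_coeff h ^ Suc M * (R * lead_coeff h) ^ K\<bar>"
  have "\<Lambda> > 0"
    using R \<open>h \<noteq> 0\<close> by (simp add: \<Lambda>_def)
  moreover have "n dvd \<Lambda>"
    if "n > 0" and "(a, b) \<in> T_set \<upsilon> \<tau>" and "n ^ 12 dvd gcd (A a b ^ 3) (B a b ^ 2)" for n a b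
    using T_set_gcd_cube_square_dvd[OF that(2) hups \<sigma>(3,4)] that(1,3) by (simp add: \<Lambda>_def)
  ultimately show ?thesis
    by (auto simp: A_form_def B_form_def \<sigma>_def)
qed

end
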